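(* Let $k\ge1$ be an integer, $a,b\in(\frac1{10},10)$, $t_1\ge0$ and $C>0$. There exists a uniformly $C^1$, uniformly elliptic real $2\times2$ matrix function $A$ on $\mathbb{T}^2\times\mathbb{R}$ with $$A=\begin{pmatrix}a&0\\0&a\end{pmatrix}\text{ for }t\le t_1,\qquad A=\begin{pmatrix}a&0\\0&b\end{pmatrix}\text{ for }t\ge t_1+C,$$ belonging to the regularity class $R(10,\frac{10\sqrt\pi}{C})$, such that $u=\cos(kx)e^{-k\sqrt a\,t}$ solves $\ddot u+\operatorname{div}(A\nabla u)=0$ in $\mathbb{T}^2\times\mathbb{R}$.
   Context: $\mathbb{T}^2=(\mathbb{R}/2\pi\mathbb{Z})^2$ with coordinates $(x,y)$; $t$ the third coordinate. $\ddot u+\operatorname{div}(A\nabla u)$ means $\partial_t^2u+\sum_{i,j\in\{x,y\}}\partial_i(A_{ij}\partial_ju)$. Regularity class $R(\Lambda,C)$: $\Lambda^{-1}|\xi|^2\le\xi^TA\xi\le\Lambda|\xi|^2$ for all $\xi\in\mathbb{R}^2$ at every point, and the entries of $A$ are $C^1$ with all first partial derivatives in $x,y,t$ bounded by $C$ in absolute value. *)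

theory Defs
  imports "HOL-Analysis.Analysis"
begin

text \<open>Points of T^2 x R are represented by vectors p :: real^3 with
  p$1 = x, p$2 = y, p$3 = t; functions on the torus are 2pi-periodic in x and y.\<close>

definition pd :: "3 \<Rightarrow> (real^3 \<Rightarrow> real) \<Rightarrow> real^3 \<Rightarrow> real" where
  "pd k f p = frechet_derivative f (at p) (axis k 1)"

definition torus_periodic :: "(real^3 \<Rightarrow> 'b) \<Rightarrow> bool" where
  "torus_periodic F \<longleftrightarrow>
     (\<forall>p. F (p + axis 1 (2*pi)) = F p \<and> F (p + axis 2 (2*pi)) = F p)"

definition reg_class :: "real \<Rightarrow> real \<Rightarrow> (real^3 \<Rightarrow> real^2^2) \<Rightarrow> bool" where
  "reg_class \<Lambda> C A \<longleftrightarrow>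
     (\<forall>p. \<forall>\<xi>::real^2. (1/\<Lambda>) * (norm \<xi>)^2 \<le> \<xi> \<bullet> (A p *v \<xi>)
                      \<and> \<xi> \<bullet> (A p *v \<xi>) \<le> \<Lambda> * (norm \<xi>)^2) \<and>
     (\<forall>i j. (\<forall>p. (\<lambda>q. A q $ i $ j) differentiable (at p)) \<and>
            (\<forall>k. continuous_on UNIV (pd k (\<lambda>q. A q $ i $ j)) \<and>
                 (\<forall>p. \<bar>pd k (\<lambda>q. A q $ i $ j) p\<bar> \<le> C)))"

definition solves_eq :: "(real^3 \<Rightarrow> real^2^2) \<Rightarrow> (real^3 \<Rightarrow> real) \<Rightarrow> bool" where
  "solves_eq A u \<longleftrightarrow>
     (\<forall>p. u differentiable (at p)) \<and>
     (\<forall>p. pd 3 u differentiable (at p)) \<and>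
     (\<forall>i::2. \<forall>p. (\<lambda>q. A q $ i $ 1 * pd 1 u q + A q $ i $ 2 * pd 2 u q) differentiable (at p)) \<and>
     (\<forall>p. pd 3 (pd 3 u) p
          + pd 1 (\<lambda>q. A q $ 1 $ 1 * pd 1 u q + A q $ 1 $ 2 * pd 2 u q) p
          + pd 2 (\<lambda>q. A q $ 2 $ 1 * pd 1 u q + A q $ 2 $ 2 * pd 2 u q) p = 0)"

definition diag2 :: "real \<Rightarrow> real \<Rightarrow> real^2^2" where
  "diag2 a b = (\<chi> i j. if i = j then (if i = 1 then a else b) else 0)"

end

theory Submission
  imports Defs
begin

text \<open>Since u does not depend on y, only the (x,x) entry of A enters the equation; keeping it
  equal to a, the ansatz u = cos(kx) exp(-k sqrt(a) t) satisfies u_tt + a u_xx = 0 whatever the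
  (y,y) entry is. That entry is a function of t alone which passes from a to b on [t1, t1 + C]
  along the C^1 smoothstep 3s^2 - 2s^3; its slope is at most 3/2, so the t-derivative of the
  coefficient is at most 10 (3/2) / C, and 3/2 < sqrt pi.\<close>

definition unit_clamp :: "real \<Rightarrow> real" where
  "unit_clamp s = max 0 (min 1 s)"

definition smoothstep :: "real \<Rightarrow> real" where
  "smoothstep s = 3 * (unit_clamp s)^2 - 2 * (unit_clamp s)^3"

definition smoothstep_deriv :: "real \<Rightarrow> real" where
  "smoothstep_deriv s = 6 * unit_clamp s * (1 - unit_clamp s)"

lemma has_field_derivative_at_from_sides:
  fixes f :: "real \<Rightarrow> real"
  assumes "(f has_field_derivative D) (at x within {..x})"
    and "(f has_field_derivative D) (at x within {x..})"
  shows "(f has_field_derivative D) (at x)"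
proof -
  have "UNIV = {..x} \<union> {x..}" by auto
  then have "at x = sup (at x within {..x}) (at x within {x..})"
    by (metis at_within_union)
  then show ?thesis
    using assms unfolding has_field_derivative_def has_derivative_within
    by (auto intro: filterlim_sup)
qed

lemma smoothstep_polynomial_has_derivative:
  "((\<lambda>s::real. 3 * s^2 - 2 * s^3) has_field_derivative (6 * s * (1 - s))) (at s within S)"
  by (auto intro!: derivative_eq_intros simp: algebra_simps power2_eq_square)

lemma smoothstep_has_field_derivative:
  "(smoothstep has_field_derivative smoothstep_deriv s) (at s)"
proof -
  let ?p = "\<lambda>s::real. 3 * s^2 - 2 * s^3"
  note defs = smoothstep_def smoothstep_deriv_def unit_clamp_def
  note poly = smoothstep_polynomial_has_derivative
  consider "s < 0" | "s = 0" | "0 < s \<and> s < 1" | "s = 1" | "s > 1" by linarith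
  then show ?thesis
  proof cases
    case 1
    show ?thesis
      by (rule has_field_derivative_transform_within_open[of "\<lambda>_. 0" _ _ "{..<0}"])
        (use 1 in \<open>auto simp: defs\<close>)
  next
    case 2
    show ?thesis
    proof (rule has_field_derivative_at_from_sides)
      show "(smoothstep has_field_derivative smoothstep_deriv s) (at s within {..s})"
        by (rule has_field_derivative_transform_within[of "\<lambda>_. 0" _ _ _ 1])
          (use 2 in \<open>auto simp: defs\<close>)
      show "(smoothstep has_field_derivative smoothstep_deriv s) (at s within {s..})"
        by (rule has_field_derivative_transform_within[of ?p _ _ _ 1])
          (use 2 poly[of s] in \<open>auto simp: defs dist_real_def\<close>)
    qed
  next
    case 3
    show ?thesis
      by (rule has_field_derivative_transform_within_open[of ?p _ _ "{0<..<1}"])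
        (use 3 poly[of s UNIV] in \<open>auto simp: defs\<close>)
  next
    case 4
    show ?thesis
    proof (rule has_field_derivative_at_from_sides)
      show "(smoothstep has_field_derivative smoothstep_deriv s) (at s within {..s})"
        by (rule has_field_derivative_transform_within[of ?p _ _ _ 1])
          (use 4 poly[of s] in \<open>auto simp: defs dist_real_def\<close>)
      show "(smoothstep has_field_derivative smoothstep_deriv s) (at s within {s..})"
        by (rule has_field_derivative_transform_within[of "\<lambda>_. 1" _ _ _ 1])
          (use 4 in \<open>auto simp: defs\<close>)
    qed
  next
    case 5
    show ?thesis
      by (rule has_field_derivative_transform_within_open[of "\<lambda>_. 1" _ _ "{1<..}"])
        (use 5 in \<open>auto simp: defs\<close>)
  qed
qed

lemma continuous_on_smoothstep_deriv: "continuous_on S smoothstep_deriv"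
  unfolding smoothstep_deriv_def unit_clamp_def by (intro continuous_intros)

lemma abs_smoothstep_deriv_le: "\<bar>smoothstep_deriv s\<bar> \<le> 3/2"
proof -
  have "0 \<le> unit_clamp s" "unit_clamp s \<le> 1" by (auto simp: unit_clamp_def)
  then have "0 \<le> smoothstep_deriv s" by (simp add: smoothstep_deriv_def)
  moreover have "smoothstep_deriv s = 3/2 - 3/2 * (2 * unit_clamp s - 1)^2"
    by (simp add: smoothstep_deriv_def algebra_simps power2_eq_square)
  moreover have "0 \<le> (2 * unit_clamp s - 1)^2" by simp
  ultimately show ?thesis by linarith
qed

lemma smoothstep_bounds: "0 \<le> smoothstep s" "smoothstep s \<le> 1"
proof -
  have c: "0 \<le> unit_clamp s" "unit_clamp s \<le> 1" by (auto simp: unit_clamp_def)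
  have "smoothstep s = (unit_clamp s)^2 * (3 - 2 * unit_clamp s)"
    by (simp add: smoothstep_def algebra_simps power2_eq_square power3_eq_cube)
  then show "0 \<le> smoothstep s" using c by simp
  have "1 - smoothstep s = (1 - unit_clamp s)^2 * (1 + 2 * unit_clamp s)"
    by (simp add: smoothstep_def algebra_simps power2_eq_square power3_eq_cube)
  then show "smoothstep s \<le> 1" using c by (smt (verit) mult_nonneg_nonneg zero_le_power2)
qed

lemma smoothstep_nonpos: "s \<le> 0 \<Longrightarrow> smoothstep s = 0"
  by (simp add: smoothstep_def unit_clamp_def)

lemma smoothstep_ge_one: "1 \<le> s \<Longrightarrow> smoothstep s = 1"
  by (simp add: smoothstep_def unit_clamp_def)

definition transition :: "real \<Rightarrow> real \<Rightarrow> real \<Rightarrow> real \<Rightarrow> real \<Rightarrow> real" where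
  "transition a b t0 L t = a + (b - a) * smoothstep ((t - t0) / L)"

definition transition_deriv :: "real \<Rightarrow> real \<Rightarrow> real \<Rightarrow> real \<Rightarrow> real \<Rightarrow> real" where
  "transition_deriv a b t0 L t = (b - a) * smoothstep_deriv ((t - t0) / L) / L"

lemma transition_has_field_derivative:
  "(transition a b t0 L has_field_derivative transition_deriv a b t0 L t) (at t)"
proof -
  have "((\<lambda>t. (t - t0) / L) has_field_derivative 1 / L) (at t)"
    by (intro DERIV_cdivide) (auto intro!: derivative_eq_intros)
  from DERIV_chain2[OF smoothstep_has_field_derivative this]
  have "((\<lambda>t. a + (b - a) * smoothstep ((t - t0) / L)) has_field_derivative
      0 + (b - a) * (smoothstep_deriv ((t - t0) / L) * (1 / L))) (at t)"
    by (intro DERIV_add DERIV_const DERIV_cmult)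
  then show ?thesis
    by (simp add: transition_def[abs_def] transition_deriv_def)
qed

lemma continuous_on_transition_deriv: "continuous_on S (transition_deriv a b t0 L)"
  unfolding transition_deriv_def divide_inverse
  by (intro continuous_intros continuous_on_compose2[OF continuous_on_smoothstep_deriv]) auto

lemma abs_transition_deriv_le:
  assumes "L > 0"
  shows "\<bar>transition_deriv a b t0 L t\<bar> \<le> \<bar>b - a\<bar> * (3/2) / L"
proof -
  have "\<bar>b - a\<bar> * \<bar>smoothstep_deriv ((t - t0) / L)\<bar> \<le> \<bar>b - a\<bar> * (3/2)"
    by (intro mult_left_mono abs_smoothstep_deriv_le) simp
  then have "\<bar>b - a\<bar> * \<bar>smoothstep_deriv ((t - t0) / L)\<bar> / L \<le> \<bar>b - a\<bar> * (3/2) / L"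
    using assms by (intro divide_right_mono) auto
  then show ?thesis
    using assms by (simp add: transition_deriv_def abs_mult)
qed

lemma transition_between:
  assumes "lo \<le> a" "a \<le> hi" "lo \<le> b" "b \<le> hi"
  shows "lo \<le> transition a b t0 L t \<and> transition a b t0 L t \<le> hi"
proof -
  define h where "h = smoothstep ((t - t0) / L)"
  have "0 \<le> h" "h \<le> 1" using smoothstep_bounds by (auto simp: h_def)
  then have "(1 - h) * lo + h * lo \<le> (1 - h) * a + h * b"
    and "(1 - h) * a + h * b \<le> (1 - h) * hi + h * hi"
    using assms by (intro add_mono mult_left_mono; simp)+
  moreover have "transition a b t0 L t = (1 - h) * a + h * b"
    by (simp add: transition_def h_def algebra_simps)
  moreover have "(1 - h) * lo + h * lo = lo" "(1 - h) * hi + h * hi = hi"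
    by (simp_all add: algebra_simps)
  ultimately show ?thesis
    by linarith
qed

lemma transition_before: "L > 0 \<Longrightarrow> t \<le> t0 \<Longrightarrow> transition a b t0 L t = a"
  by (simp add: transition_def smoothstep_nonpos divide_nonpos_pos)

lemma transition_after: "L > 0 \<Longrightarrow> t0 + L \<le> t \<Longrightarrow> transition a b t0 L t = b"
  by (simp add: transition_def smoothstep_ge_one le_divide_eq)

lemma pd_eq_has_derivative: "(f has_derivative f') (at p) \<Longrightarrow> pd k f p = f' (axis k 1)"
  by (simp add: pd_def frechet_derivative_at[symmetric])

lemma has_derivative_vec_nth: "((\<lambda>q::real^'n. q $ i) has_derivative (\<lambda>v. v $ i)) F"
  by (rule bounded_linear_imp_has_derivative) (rule bounded_linear_vec_nth)

lemma inner_diag2: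
  "\<xi> \<bullet> (diag2 a b *v \<xi>) = a * (\<xi>$1)^2 + b * (\<xi>$2)^2"
  by (simp add: inner_vec_def matrix_vector_mult_def sum_2 diag2_def power2_eq_square)

lemma diag2_elliptic:
  assumes "1/\<Lambda> \<le> a" "a \<le> \<Lambda>" "1/\<Lambda> \<le> b" "b \<le> \<Lambda>"
  shows "(1/\<Lambda>) * (norm \<xi>)^2 \<le> \<xi> \<bullet> (diag2 a b *v \<xi>)
    \<and> \<xi> \<bullet> (diag2 a b *v \<xi>) \<le> \<Lambda> * (norm \<xi>)^2"
proof -
  have "(norm \<xi>)^2 = (\<xi>$1)^2 + (\<xi>$2)^2"
    unfolding power2_norm_eq_inner by (simp add: inner_vec_def sum_2 power2_eq_square)
  moreover have "1/\<Lambda> * (\<xi>$1)^2 \<le> a * (\<xi>$1)^2" "a * (\<xi>$1)^2 \<le> \<Lambda> * (\<xi>$1)^2"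
    "1/\<Lambda> * (\<xi>$2)^2 \<le> b * (\<xi>$2)^2" "b * (\<xi>$2)^2 \<le> \<Lambda> * (\<xi>$2)^2"
    using assms mult_right_mono zero_le_power2 by metis+
  ultimately show ?thesis
    unfolding inner_diag2 by (simp add: distrib_left)
qed

lemma torus_periodic_vertical: "torus_periodic (\<lambda>p. F (p$3))"
  by (simp add: torus_periodic_def axis_def)

lemma diag2_vertical_entry_has_derivative:
  fixes p :: "real^3"
  assumes "\<And>t. (g has_field_derivative g' t) (at t)"
  shows "((\<lambda>q. diag2 a (g (q$3)) $ i $ j) has_derivative
           (\<lambda>v. if i = j \<and> i \<noteq> 1 then v$3 * g' (p$3) else 0)) (at p)"
  using DERIV_compose_FDERIV[OF assms has_derivative_vec_nth]
  by (cases "i = j"; cases "i = 1") (auto simp: diag2_def)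

lemma reg_class_diag2_vertical:
  assumes "1/\<Lambda> \<le> a" "a \<le> \<Lambda>" "\<And>t. 1/\<Lambda> \<le> g t \<and> g t \<le> \<Lambda>"
    and g': "\<And>t. (g has_field_derivative g' t) (at t)" "continuous_on UNIV g'"
    and "\<And>t. \<bar>g' t\<bar> \<le> C"
  shows "reg_class \<Lambda> C (\<lambda>p. diag2 a (g (p$3)))"
  unfolding reg_class_def
proof (intro conjI allI)
  fix p :: "real^3" and \<xi> :: "real^2"
  show "(1/\<Lambda>) * (norm \<xi>)^2 \<le> \<xi> \<bullet> (diag2 a (g (p$3)) *v \<xi>)"
    "\<xi> \<bullet> (diag2 a (g (p$3)) *v \<xi>) \<le> \<Lambda> * (norm \<xi>)^2"
    using diag2_elliptic assms(1-3) by blast+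
next
  fix i j :: 2 and k :: 3
  have pd_entry: "pd k (\<lambda>q. diag2 a (g (q$3)) $ i $ j) =
      (\<lambda>q. if i = j \<and> i \<noteq> 1 \<and> k = 3 then g' (q$3) else 0)"
    by (rule ext, subst pd_eq_has_derivative[OF diag2_vertical_entry_has_derivative[OF g'(1)]])
      (auto simp: axis_def)
  show "(\<lambda>q. diag2 a (g (q$3)) $ i $ j) differentiable (at p)" for p :: "real^3"
    using diag2_vertical_entry_has_derivative[OF g'(1)] unfolding differentiable_def by blast
  have g'_vertical_cont: "continuous_on UNIV (\<lambda>q::real^3. g' (q$3))"
    by (intro continuous_on_compose2[OF g'(2)] continuous_intros) auto
  show "continuous_on UNIV (pd k (\<lambda>q. diag2 a (g (q$3)) $ i $ j))"
  proof (cases "i = j \<and> i \<noteq> 1 \<and> k = 3")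
    case True
    show ?thesis unfolding pd_entry if_P[OF True] by (rule g'_vertical_cont)
  next
    case False
    show ?thesis unfolding pd_entry if_not_P[OF False] by (rule continuous_on_const)
  qed
  show "\<bar>pd k (\<lambda>q. diag2 a (g (q$3)) $ i $ j) p\<bar> \<le> C" for p :: "real^3"
    unfolding pd_entry using assms(6) order_trans[OF abs_ge_zero assms(6)] by simp
qed

definition cos_mode :: "real \<Rightarrow> real \<Rightarrow> real^3 \<Rightarrow> real" where
  "cos_mode \<kappa> \<mu> p = cos (\<kappa> * p$1) * exp (\<mu> * p$3)"

definition sin_mode :: "real \<Rightarrow> real \<Rightarrow> real^3 \<Rightarrow> real" where
  "sin_mode \<kappa> \<mu> p = sin (\<kappa> * p$1) * exp (\<mu> * p$3)"

lemma cos_mode_has_derivative: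
  "(cos_mode \<kappa> \<mu> has_derivative
     (\<lambda>v. - \<kappa> * sin_mode \<kappa> \<mu> p * v$1 + \<mu> * cos_mode \<kappa> \<mu> p * v$3)) (at p)"
  unfolding cos_mode_def[abs_def] sin_mode_def
  by (rule derivative_eq_intros has_derivative_vec_nth refl | simp)+ (auto simp: algebra_simps)

lemma sin_mode_has_derivative:
  "(sin_mode \<kappa> \<mu> has_derivative
     (\<lambda>v. \<kappa> * cos_mode \<kappa> \<mu> p * v$1 + \<mu> * sin_mode \<kappa> \<mu> p * v$3)) (at p)"
  unfolding sin_mode_def[abs_def] cos_mode_def
  by (rule derivative_eq_intros has_derivative_vec_nth refl | simp)+ (auto simp: algebra_simps)

lemma pd_cos_mode:
  "pd 1 (cos_mode \<kappa> \<mu>) p = - \<kappa> * sin_mode \<kappa> \<mu> p"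
  "pd 2 (cos_mode \<kappa> \<mu>) p = 0"
  "pd 3 (cos_mode \<kappa> \<mu>) p = \<mu> * cos_mode \<kappa> \<mu> p"
  by (simp_all add: pd_eq_has_derivative[OF cos_mode_has_derivative] axis_def)

lemma pd_sin_mode:
  "pd 1 (sin_mode \<kappa> \<mu>) p = \<kappa> * cos_mode \<kappa> \<mu> p"
  "pd 2 (sin_mode \<kappa> \<mu>) p = 0"
  by (simp_all add: pd_eq_has_derivative[OF sin_mode_has_derivative] axis_def)

lemma pd_cmult:
  assumes "f differentiable (at p)"
  shows "pd k (\<lambda>q. c * f q) p = c * pd k f p"
proof -
  obtain f' where "(f has_derivative f') (at p)"
    using assms unfolding differentiable_def by blast
  then show ?thesis
    using has_derivative_mult_right[of f f' "at p" c] by (simp add: pd_eq_has_derivative)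
qed

lemma solves_eq_diag2_cos_mode:
  fixes \<kappa> a :: real and g :: "real \<Rightarrow> real"
  assumes "0 \<le> a"
  shows "solves_eq (\<lambda>p. diag2 a (g (p$3))) (\<lambda>p. cos (\<kappa> * p$1) * exp (- \<kappa> * sqrt a * p$3))"
proof -
  define \<mu> where "\<mu> = - \<kappa> * sqrt a"
  define u where "u = cos_mode \<kappa> \<mu>"
  have u_eq: "(\<lambda>p. cos (\<kappa> * p$1) * exp (- \<kappa> * sqrt a * p$3)) = u"
    by (simp add: u_def \<mu>_def cos_mode_def[abs_def])
  have mode_diff: "cos_mode \<kappa> \<mu> differentiable (at p)" "sin_mode \<kappa> \<mu> differentiable (at p)" for p
    using cos_mode_has_derivative sin_mode_has_derivative unfolding differentiable_def by blast+
  have ut: "pd 3 u = (\<lambda>q. \<mu> * u q)"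
    by (simp add: u_def pd_cos_mode fun_eq_iff)
  have flux: "(\<lambda>q. diag2 a (g (q$3)) $ i $ 1 * pd 1 u q + diag2 a (g (q$3)) $ i $ 2 * pd 2 u q)
      = (\<lambda>q. (if i = 1 then - a * \<kappa> else 0) * sin_mode \<kappa> \<mu> q)" for i
    by (auto simp: u_def pd_cos_mode diag2_def fun_eq_iff)
  have pd_flux: "pd k (\<lambda>q. c * sin_mode \<kappa> \<mu> q) p = c * pd k (sin_mode \<kappa> \<mu>) p" for k c p
    using mode_diff by (intro pd_cmult) simp
  have "pd 3 (pd 3 u) p + pd 1 (\<lambda>q. (if (1::2) = 1 then - a * \<kappa> else 0) * sin_mode \<kappa> \<mu> q) p
      + pd 2 (\<lambda>q. (if (2::2) = 1 then - a * \<kappa> else 0) * sin_mode \<kappa> \<mu> q) p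
      = (\<mu>^2 - a * \<kappa>^2) * u p" for p
    unfolding ut pd_flux
    by (simp add: pd_cmult mode_diff u_def pd_cos_mode pd_sin_mode algebra_simps power2_eq_square)
  moreover have "\<mu>^2 = a * \<kappa>^2"
    using assms by (simp add: \<mu>_def power_mult_distrib)
  ultimately show ?thesis
    unfolding solves_eq_def u_eq flux ut
    using mode_diff by (simp add: u_def differentiable_mult)
qed

theorem mainTheorem10:
  fixes k :: nat and a b t1 C :: real
  assumes "k \<ge> 1"
    and "1/10 < a" "a < 10" "1/10 < b" "b < 10"
    and "t1 \<ge> 0" and "C > 0"
  shows "\<exists>A :: real^3 \<Rightarrow> real^2^2.
           torus_periodic A \<and>
           (\<forall>p. p$3 \<le> t1 \<longrightarrow> A p = diag2 a a) \<and>
           (\<forall>p. p$3 \<ge> t1 + C \<longrightarrow> A p = diag2 a b) \<and>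
           reg_class 10 (10 * sqrt pi / C) A \<and>
           solves_eq A (\<lambda>p. cos (real k * p$1) * exp (- real k * sqrt a * p$3))"
proof -
  let ?A = "\<lambda>p. diag2 a (transition a b t1 C (p$3))"
  have "(3/2::real) \<le> sqrt 3" by (rule real_le_rsqrt) (simp add: power2_eq_square)
  also have "\<dots> \<le> sqrt pi" using pi_gt3 by simp
  finally have "\<bar>b - a\<bar> * (3/2) / C \<le> 10 * sqrt pi / C"
    using assms by (intro divide_right_mono mult_mono) auto
  then have "reg_class 10 (10 * sqrt pi / C) ?A"
    using assms
    by (intro reg_class_diag2_vertical[where g' = "transition_deriv a b t1 C"]
        transition_has_field_derivative
        continuous_on_transition_deriv transition_between order_trans[OF abs_transition_deriv_le])
      auto
  moreover have "solves_eq ?A (\<lambda>p. cos (real k * p$1) * exp (- real k * sqrt a * p$3))"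
    using assms by (intro solves_eq_diag2_cos_mode) auto
  ultimately show ?thesis
    using assms
    by (intro exI[of _ ?A] conjI torus_periodic_vertical allI impI)
      (simp_all add: transition_before transition_after)
qed

end
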